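(* Let $G$ be a plane graph whose set of vertices has no accumulation point in $\mathbb{R}^2$ and which has bounded vertex degrees. If $G$ is hyperbolic, then the lengths of its geodetic cycles are bounded, i.e. $\sup\{|C| : C \text{ a geodetic cycle of } G\}<\infty$.
   Context: A plane graph is a graph with a fixed embedding in $\mathbb{R}^2$ with no two edges crossing. For a cycle $C$ and vertices $x,y$ on $C$, $xCy$ and $yCx$ denote the two arcs of $C$ joining $x$ and $y$. A geodetic cycle is a cycle $C$ such that for every two vertices $x,y\in C$ at least one of $xCy$, $yCx$ is a geodesic in $G$ (a path whose length equals the graph distance between its endpoints). A geodetic triangle consists of three vertices and three geodesics (sides) joining them pairwise; it is $\delta$-thin if each side lies in the $\delta$-neighbourhood of the union of the other two. A connected graph is $\delta$-hyperbolic if every geodetic triangle is $\delta$-thin; a graph is hyperbolic if there is $\delta\ge0$ such that each connected component is $\delta$-hyperbolic. *)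

theory Defs
  imports "HOL-Analysis.Analysis"
begin

definition graph :: "'v set \<Rightarrow> ('v \<Rightarrow> 'v \<Rightarrow> bool) \<Rightarrow> bool" where
  "graph V E \<longleftrightarrow> (\<forall>u v. E u v \<longrightarrow> u \<in> V \<and> v \<in> V \<and> u \<noteq> v \<and> E v u)"

definition plane_graph ::
  "'v set \<Rightarrow> ('v \<Rightarrow> 'v \<Rightarrow> bool) \<Rightarrow> ('v \<Rightarrow> real^2) \<Rightarrow> ('v \<Rightarrow> 'v \<Rightarrow> real \<Rightarrow> real^2) \<Rightarrow> bool" where
  "plane_graph V E p c \<longleftrightarrow>
     graph V E \<and> inj_on p V \<and>
     (\<forall>u v. E u v \<longrightarrow> arc (c u v) \<and> pathstart (c u v) = p u \<and> pathfinish (c u v) = p v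
              \<and> path_image (c v u) = path_image (c u v)) \<and>
     (\<forall>u v w. E u v \<and> w \<in> V \<and> w \<noteq> u \<and> w \<noteq> v \<longrightarrow> p w \<notin> path_image (c u v)) \<and>
     (\<forall>u v x y. E u v \<and> E x y \<and> {u, v} \<noteq> {x, y} \<longrightarrow>
        path_image (c u v) \<inter> path_image (c x y) \<subseteq> p ` ({u, v} \<inter> {x, y}))"

definition no_accumulation :: "'v set \<Rightarrow> ('v \<Rightarrow> real^2) \<Rightarrow> bool" where
  "no_accumulation V p \<longleftrightarrow> (\<forall>z. \<not> z islimpt (p ` V))"

definition bounded_degree :: "'v set \<Rightarrow> ('v \<Rightarrow> 'v \<Rightarrow> bool) \<Rightarrow> bool" where
  "bounded_degree V E \<longleftrightarrow> (\<exists>D::nat. \<forall>v\<in>V. finite {u. E v u} \<and> card {u. E v u} \<le> D)"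

definition walk :: "'v set \<Rightarrow> ('v \<Rightarrow> 'v \<Rightarrow> bool) \<Rightarrow> 'v list \<Rightarrow> bool" where
  "walk V E xs \<longleftrightarrow> xs \<noteq> [] \<and> set xs \<subseteq> V \<and> (\<forall>i. Suc i < length xs \<longrightarrow> E (xs ! i) (xs ! Suc i))"

definition gpath :: "'v set \<Rightarrow> ('v \<Rightarrow> 'v \<Rightarrow> bool) \<Rightarrow> 'v list \<Rightarrow> bool" where
  "gpath V E xs \<longleftrightarrow> walk V E xs \<and> distinct xs"

definition wlen :: "'v list \<Rightarrow> nat" where
  "wlen xs = length xs - 1"

text \<open>Graph distance (only meaningful for vertices in the same component).\<close>
definition gdist :: "'v set \<Rightarrow> ('v \<Rightarrow> 'v \<Rightarrow> bool) \<Rightarrow> 'v \<Rightarrow> 'v \<Rightarrow> nat" where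
  "gdist V E x y = (LEAST n. \<exists>xs. walk V E xs \<and> hd xs = x \<and> last xs = y \<and> wlen xs = n)"

definition geodesic :: "'v set \<Rightarrow> ('v \<Rightarrow> 'v \<Rightarrow> bool) \<Rightarrow> 'v list \<Rightarrow> bool" where
  "geodesic V E xs \<longleftrightarrow> gpath V E xs \<and> wlen xs = gdist V E (hd xs) (last xs)"

text \<open>Its length |C| is the number of its vertices
(= number of its edges). cyc_arc C i j is the arc of C from C!i to C!j going forward.\<close>

definition gcycle :: "'v set \<Rightarrow> ('v \<Rightarrow> 'v \<Rightarrow> bool) \<Rightarrow> 'v list \<Rightarrow> bool" where
  "gcycle V E cs \<longleftrightarrow> length cs \<ge> 3 \<and> gpath V E cs \<and> E (last cs) (hd cs)"

definition cyc_arc :: "'v list \<Rightarrow> nat \<Rightarrow> nat \<Rightarrow> 'v list" where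
  "cyc_arc cs i j = map (\<lambda>k. cs ! ((i + k) mod length cs))
                        [0..<(j + length cs - i) mod length cs + 1]"

definition geodetic_cycle :: "'v set \<Rightarrow> ('v \<Rightarrow> 'v \<Rightarrow> bool) \<Rightarrow> 'v list \<Rightarrow> bool" where
  "geodetic_cycle V E cs \<longleftrightarrow> gcycle V E cs \<and>
     (\<forall>i j. i < length cs \<and> j < length cs \<longrightarrow>
        geodesic V E (cyc_arc cs i j) \<or> geodesic V E (cyc_arc cs j i))"

definition near :: "'v set \<Rightarrow> ('v \<Rightarrow> 'v \<Rightarrow> bool) \<Rightarrow> real \<Rightarrow> 'v \<Rightarrow> 'v set \<Rightarrow> bool" where
  "near V E \<delta> v S \<longleftrightarrow> (\<exists>w\<in>S. \<exists>xs. walk V E xs \<and> hd xs = v \<and> last xs = w \<and> real (wlen xs) \<le> \<delta>)"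

definition geodetic_triangle :: "'v set \<Rightarrow> ('v \<Rightarrow> 'v \<Rightarrow> bool) \<Rightarrow> 'v list \<Rightarrow> 'v list \<Rightarrow> 'v list \<Rightarrow> bool" where
  "geodetic_triangle V E P Q R \<longleftrightarrow> geodesic V E P \<and> geodesic V E Q \<and> geodesic V E R \<and>
     last P = hd Q \<and> last Q = hd R \<and> last R = hd P"

definition thin_triangle :: "'v set \<Rightarrow> ('v \<Rightarrow> 'v \<Rightarrow> bool) \<Rightarrow> real \<Rightarrow> 'v list \<Rightarrow> 'v list \<Rightarrow> 'v list \<Rightarrow> bool" where
  "thin_triangle V E \<delta> P Q R \<longleftrightarrow>
     (\<forall>v\<in>set P. near V E \<delta> v (set Q \<union> set R)) \<and>
     (\<forall>v\<in>set Q. near V E \<delta> v (set R \<union> set P)) \<and>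
     (\<forall>v\<in>set R. near V E \<delta> v (set P \<union> set Q))"

definition hyperbolic :: "'v set \<Rightarrow> ('v \<Rightarrow> 'v \<Rightarrow> bool) \<Rightarrow> bool" where
  "hyperbolic V E \<longleftrightarrow> (\<exists>\<delta>\<ge>0. \<forall>P Q R. geodetic_triangle V E P Q R \<longrightarrow> thin_triangle V E \<delta> P Q R)"

end

theory Submission
  imports Defs
begin

text \<open>If C is a geodetic cycle of length n, then every arc of C of length at most
n/2 is a geodesic, so cutting C at three points spaced by about n/3 yields a geodetic
triangle whose sides are its three arcs. The vertex in the middle of one side lies at
distance about n/6 from the other two sides, measured along C, and since C is geodetic
this is also its graph distance to them. Hence n/6 is at most the thinness constant.\<close>

lemma add_mod_cancel_left_less:
  fixes n :: nat
  assumes "(i + a) mod n = (i + b) mod n" "a < n" "b < n"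
  shows "a = b"
  using assms
proof (induction a b rule: linorder_wlog)
  case (le a b)
  then have "n dvd b - a"
    using mod_eq_dvd_iff_nat[of "i + a" "i + b" n] by simp
  then show ?case
    using le dvd_imp_le[of n "b - a"] by (cases "a = b") auto
next
  case (sym a b)
  then show ?case by metis
qed

lemma offset_mod_eq:
  fixes n :: nat
  assumes "i \<le> j" "j < n"
  shows "(j + n - i) mod n = j - i"
proof -
  have shift: "j + n - i = (j - i) + n" using assms by simp
  show ?thesis unfolding shift mod_add_self2 using assms by simp
qed

lemma offset_mod_eq_wrap:
  fixes n :: nat
  assumes "j < i" "i < n"
  shows "(j + n - i) mod n = j + n - i"
  using assms by simp

lemma walk_rev:
  assumes g: "graph V E" and w: "walk V E xs"
  shows "walk V E (rev xs)"
  unfolding walk_def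
proof (intro conjI allI impI)
  show "rev xs \<noteq> []" "set (rev xs) \<subseteq> V" using w unfolding walk_def by auto
next
  fix i assume i: "Suc i < length (rev xs)"
  let ?k = "length xs - 2 - i"
  have "E (xs ! ?k) (xs ! Suc ?k)"
    using w i unfolding walk_def by simp
  then have "E (xs ! Suc ?k) (xs ! ?k)"
    using g unfolding graph_def by blast
  moreover have "rev xs ! i = xs ! Suc ?k" "rev xs ! Suc i = xs ! ?k"
    using i by (simp_all add: rev_nth Suc_diff_Suc)
  ultimately show "E (rev xs ! i) (rev xs ! Suc i)" by simp
qed

lemma gdist_commute:
  assumes "graph V E"
  shows "gdist V E x y = gdist V E y x"
proof -
  have reverse: "\<exists>xs. walk V E xs \<and> hd xs = y \<and> last xs = x \<and> wlen xs = n"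
    if "walk V E xs" "hd xs = x" "last xs = y" "wlen xs = n" for x y n xs
  proof (intro exI conjI)
    have "xs \<noteq> []" using \<open>walk V E xs\<close> unfolding walk_def by simp
    then show "hd (rev xs) = y" "last (rev xs) = x" "wlen (rev xs) = n"
      using that by (simp_all add: hd_rev last_rev wlen_def)
    show "walk V E (rev xs)" using walk_rev[OF assms \<open>walk V E xs\<close>] .
  qed
  have "(\<lambda>n. \<exists>xs. walk V E xs \<and> hd xs = x \<and> last xs = y \<and> wlen xs = n) =
        (\<lambda>n. \<exists>xs. walk V E xs \<and> hd xs = y \<and> last xs = x \<and> wlen xs = n)"
    by (intro ext iffI) (blast intro: reverse)+
  then show ?thesis unfolding gdist_def by simp
qed

lemma gdist_le_wlen:
  assumes "walk V E xs"
  shows "gdist V E (hd xs) (last xs) \<le> wlen xs"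
  unfolding gdist_def by (rule Least_le) (use assms in blast)

lemma near_gdist_le:
  assumes "near V E \<delta> v S"
  obtains w where "w \<in> S" "real (gdist V E v w) \<le> \<delta>"
proof -
  obtain w xs where "w \<in> S" "walk V E xs" "hd xs = v" "last xs = w" "real (wlen xs) \<le> \<delta>"
    using assms unfolding near_def by blast
  then show ?thesis
    using that gdist_le_wlen[of V E xs] by force
qed

lemma gcycle_adjacent:
  assumes "gcycle V E C" "t < length C"
  shows "E (C ! t) (C ! (Suc t mod length C))"
proof (cases "Suc t < length C")
  case True
  then show ?thesis using assms unfolding gcycle_def gpath_def walk_def by simp
next
  case False
  then have "Suc t = length C" using assms(2) by simp
  then have "t = length C - 1" "Suc t mod length C = 0" "C \<noteq> []" by auto
  then show ?thesis using assms(1) unfolding gcycle_def by (simp add: last_conv_nth hd_conv_nth)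
qed

lemma length_cyc_arc: "length (cyc_arc C i j) = (j + length C - i) mod length C + 1"
  by (simp add: cyc_arc_def del: upt_Suc)

lemma wlen_cyc_arc: "wlen (cyc_arc C i j) = (j + length C - i) mod length C"
  by (simp add: wlen_def length_cyc_arc)

lemma nth_cyc_arc:
  "k < (j + length C - i) mod length C + 1 \<Longrightarrow> cyc_arc C i j ! k = C ! ((i + k) mod length C)"
  by (simp add: cyc_arc_def del: upt_Suc)

lemma set_cyc_arc:
  "set (cyc_arc C i j) = (\<lambda>k. C ! ((i + k) mod length C)) ` {0..(j + length C - i) mod length C}"
  unfolding cyc_arc_def by (auto simp del: upt_Suc simp: less_Suc_eq_le)

lemma hd_cyc_arc: "i < length C \<Longrightarrow> hd (cyc_arc C i j) = C ! i"
  by (simp add: cyc_arc_def hd_map del: upt_Suc)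

lemma last_cyc_arc:
  assumes "i < length C" "j < length C"
  shows "last (cyc_arc C i j) = C ! j"
proof -
  let ?n = "length C"
  have "last (cyc_arc C i j) = C ! ((i + (j + ?n - i) mod ?n) mod ?n)"
    by (simp add: cyc_arc_def last_map del: upt_Suc)
  also have "(i + (j + ?n - i) mod ?n) mod ?n = (j + ?n) mod ?n"
    using assms by (simp add: mod_add_right_eq)
  finally show ?thesis using assms by simp
qed

lemma set_cyc_arc_forward:
  assumes "i \<le> j" "j < length C"
  shows "set (cyc_arc C i j) = (!) C ` {i..j}"
proof -
  have "(\<lambda>k. C ! ((i + k) mod length C)) ` {0..j - i} = (\<lambda>k. C ! (i + k)) ` {0..j - i}"
    using assms by (intro image_cong) auto
  also have "\<dots> = (!) C ` ((+) i ` {0..j - i})"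
    by (simp only: image_image)
  also have "(+) i ` {0..j - i} = {i..j}"
    using assms by simp
  finally show ?thesis
    unfolding set_cyc_arc offset_mod_eq[OF assms] .
qed

lemma set_cyc_arc_to_start:
  assumes "0 < i" "i < length C"
  shows "set (cyc_arc C i 0) = (!) C ` ({i..<length C} \<union> {0})"
proof -
  let ?n = "length C"
  have "set (cyc_arc C i 0) = (\<lambda>k. C ! ((i + k) mod ?n)) ` {0..?n - i}"
    unfolding set_cyc_arc using offset_mod_eq_wrap[OF assms] by simp
  also have "\<dots> = (!) C ` ((\<lambda>k. (i + k) mod ?n) ` {0..?n - i})"
    by (simp only: image_image)
  also have "(\<lambda>k. (i + k) mod ?n) ` {0..?n - i} = {i..<?n} \<union> {0}"
  proof (intro equalityI subsetI)
    fix t assume "t \<in> (\<lambda>k. (i + k) mod ?n) ` {0..?n - i}"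
    then obtain k where "k \<le> ?n - i" "t = (i + k) mod ?n" by auto
    moreover from this have "i + k < ?n \<or> i + k = ?n" using assms by linarith
    ultimately show "t \<in> {i..<?n} \<union> {0}" by auto
  next
    fix t assume t: "t \<in> {i..<?n} \<union> {0}"
    define k where "k = (if t = 0 then ?n - i else t - i)"
    have "t = (i + k) mod ?n" "k \<in> {0..?n - i}" using t assms unfolding k_def by auto
    then show "t \<in> (\<lambda>k. (i + k) mod ?n) ` {0..?n - i}" by (rule image_eqI)
  qed
  finally show ?thesis .
qed

lemma walk_cyc_arc:
  assumes "gcycle V E C"
  shows "walk V E (cyc_arc C i j)"
proof -
  have n: "length C > 0" and V: "set C \<subseteq> V"
    using assms unfolding gcycle_def gpath_def walk_def by auto
  show ?thesis unfolding walk_def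
  proof (intro conjI allI impI)
    show "cyc_arc C i j \<noteq> []" by (simp add: cyc_arc_def del: upt_Suc)
    show "set (cyc_arc C i j) \<subseteq> V" using V n by (auto simp: set_cyc_arc)
  next
    fix k assume "Suc k < length (cyc_arc C i j)"
    then have k: "Suc k < (j + length C - i) mod length C + 1" by (simp add: length_cyc_arc)
    have "Suc ((i + k) mod length C) mod length C = (i + Suc k) mod length C"
      by (simp add: mod_Suc_eq)
    then show "E (cyc_arc C i j ! k) (cyc_arc C i j ! Suc k)"
      using gcycle_adjacent[OF assms, of "(i + k) mod length C"] n k by (simp add: nth_cyc_arc)
  qed
qed

lemma distinct_cyc_arc:
  assumes "gcycle V E C"
  shows "distinct (cyc_arc C i j)"
proof -
  let ?n = "length C"
  have n: "?n > 0" and d: "distinct C" using assms unfolding gcycle_def gpath_def by auto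
  have "inj_on (\<lambda>k. C ! ((i + k) mod ?n)) {0..<(j + ?n - i) mod ?n + 1}"
  proof (rule inj_onI)
    fix a b assume "a \<in> {0..<(j + ?n - i) mod ?n + 1}" "b \<in> {0..<(j + ?n - i) mod ?n + 1}"
      and eq: "C ! ((i + a) mod ?n) = C ! ((i + b) mod ?n)"
    moreover have "(j + ?n - i) mod ?n < ?n" using n by simp
    ultimately have "a < ?n" "b < ?n" by auto
    moreover have "(i + a) mod ?n = (i + b) mod ?n"
      using eq d n by (simp add: nth_eq_iff_index_eq)
    ultimately show "a = b" using add_mod_cancel_left_less by blast
  qed
  then show ?thesis unfolding cyc_arc_def by (simp add: distinct_map del: upt_Suc)
qed

lemma geodetic_cycle_gdist:
  assumes g: "graph V E" and gc: "geodetic_cycle V E C"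
    and i: "i < length C" and j: "j < length C"
  shows "gdist V E (C ! i) (C ! j) = min ((j + length C - i) mod length C) ((i + length C - j) mod length C)"
proof -
  have cyc: "gcycle V E C" using gc unfolding geodetic_cycle_def by simp
  have "gdist V E (C ! i) (C ! j) \<le> (j + length C - i) mod length C"
    using gdist_le_wlen[OF walk_cyc_arc[OF cyc, of i j]]
    by (simp add: hd_cyc_arc[OF i] last_cyc_arc[OF i j] wlen_cyc_arc)
  moreover have "gdist V E (C ! j) (C ! i) \<le> (i + length C - j) mod length C"
    using gdist_le_wlen[OF walk_cyc_arc[OF cyc, of j i]]
    by (simp add: hd_cyc_arc[OF j] last_cyc_arc[OF j i] wlen_cyc_arc)
  moreover have "geodesic V E (cyc_arc C i j) \<or> geodesic V E (cyc_arc C j i)"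
    using gc i j unfolding geodetic_cycle_def by blast
  then have "gdist V E (C ! i) (C ! j) = (j + length C - i) mod length C \<or>
             gdist V E (C ! j) (C ! i) = (i + length C - j) mod length C"
    unfolding geodesic_def
    by (auto simp: hd_cyc_arc i j last_cyc_arc wlen_cyc_arc)
  ultimately show ?thesis
    using gdist_commute[OF g, of "C ! i" "C ! j"] by linarith
qed

lemma geodesic_cyc_arc_short:
  assumes g: "graph V E" and gc: "geodetic_cycle V E C"
    and i: "i < length C" and j: "j < length C"
    and short: "(j + length C - i) mod length C \<le> (i + length C - j) mod length C"
  shows "geodesic V E (cyc_arc C i j)"
proof -
  have cyc: "gcycle V E C" using gc unfolding geodetic_cycle_def by simp
  show ?thesis
    unfolding geodesic_def gpath_def
    using walk_cyc_arc[OF cyc] distinct_cyc_arc[OF cyc] geodetic_cycle_gdist[OF g gc i j] short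
    by (simp add: hd_cyc_arc i j last_cyc_arc wlen_cyc_arc)
qed

lemma geodetic_cycle_length_le:
  assumes g: "graph V E" and gc: "geodetic_cycle V E C" and "0 \<le> \<delta>"
    and thin: "\<And>P Q R. geodetic_triangle V E P Q R \<Longrightarrow> thin_triangle V E \<delta> P Q R"
  shows "real (length C div 6) \<le> \<delta>"
proof (cases "length C < 6")
  case True
  then show ?thesis using \<open>0 \<le> \<delta>\<close> by simp
next
  case False
  define n where "n = length C"
  define a where "a = n div 3"
  define b where "b = 2 * n div 3"
  define m where "m = n div 6"
  have ab: "0 < m" "2 * m \<le> a" "a < b" "b < n" "2 * a \<le> n" "2 * (b - a) \<le> n" "n \<le> 2 * b"
    using False unfolding n_def a_def b_def m_def by linarith+
  note short = geodesic_cyc_arc_short[OF g gc, folded n_def]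
  define P where "P = cyc_arc C 0 a"
  define Q where "Q = cyc_arc C a b"
  define R where "R = cyc_arc C b 0"
  have "geodesic V E P"
    unfolding P_def using ab offset_mod_eq[of 0 a n] offset_mod_eq_wrap[of 0 a n]
    by (intro short) simp_all
  moreover have "geodesic V E Q"
    unfolding Q_def using ab offset_mod_eq[of a b n] offset_mod_eq_wrap[of a b n]
    by (intro short) simp_all
  moreover have "geodesic V E R"
    unfolding R_def using ab offset_mod_eq[of 0 b n] offset_mod_eq_wrap[of 0 b n]
    by (intro short) simp_all
  moreover have "last P = hd Q" "last Q = hd R" "last R = hd P"
    unfolding P_def Q_def R_def using ab
    by (simp_all add: hd_cyc_arc last_cyc_arc flip: n_def)
  ultimately have "thin_triangle V E \<delta> P Q R"
    by (intro thin) (simp add: geodetic_triangle_def)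
  moreover have "C ! m \<in> set P"
    unfolding P_def using ab by (simp add: set_cyc_arc_forward flip: n_def)
  ultimately have "near V E \<delta> (C ! m) (set Q \<union> set R)"
    unfolding thin_triangle_def by blast
  then obtain w where "w \<in> set Q \<union> set R" and w: "real (gdist V E (C ! m) w) \<le> \<delta>"
    by (rule near_gdist_le)
  moreover have "set Q \<union> set R = (!) C ` ({a..b} \<union> ({b..<n} \<union> {0}))"
    unfolding Q_def R_def using ab
    by (simp add: set_cyc_arc_forward set_cyc_arc_to_start image_Un flip: n_def)
  ultimately obtain t where "t \<in> {a..b} \<union> ({b..<n} \<union> {0})" and "w = C ! t"
    by blast
  then have t: "t = 0 \<or> a \<le> t \<and> t < n"
    using ab by auto
  have "m \<le> gdist V E (C ! m) (C ! t)"
  proof (cases "t = 0")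
    case True
    then show ?thesis
      using ab geodetic_cycle_gdist[OF g gc, of m 0] offset_mod_eq_wrap[of 0 m n]
      by (simp flip: n_def)
  next
    case False
    then have "a \<le> t" "t < n" using t by simp_all
    then show ?thesis
      using ab geodetic_cycle_gdist[OF g gc, of m t] offset_mod_eq[of m t n] offset_mod_eq_wrap[of m t n]
      by (simp flip: n_def) linarith
  qed
  then show ?thesis
    using w \<open>w = C ! t\<close> unfolding m_def n_def by simp
qed

theorem lemma3p1:
  fixes V :: "'v set" and E :: "'v \<Rightarrow> 'v \<Rightarrow> bool"
    and p :: "'v \<Rightarrow> real^2" and c :: "'v \<Rightarrow> 'v \<Rightarrow> real \<Rightarrow> real^2"
  assumes "plane_graph V E p c"
    and "no_accumulation V p"
    and "bounded_degree V E"
    and "hyperbolic V E"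
  shows "\<exists>B::nat. \<forall>C. geodetic_cycle V E C \<longrightarrow> length C \<le> B"
proof -
  have g: "graph V E" using assms(1) unfolding plane_graph_def by simp
  obtain \<delta> where "0 \<le> \<delta>"
    and thin: "\<And>P Q R. geodetic_triangle V E P Q R \<Longrightarrow> thin_triangle V E \<delta> P Q R"
    using assms(4) unfolding hyperbolic_def by blast
  have "length C \<le> 6 * nat \<lceil>\<delta>\<rceil> + 5" if "geodetic_cycle V E C" for C
  proof -
    have "real (length C div 6) \<le> \<delta>"
      using geodetic_cycle_length_le[OF g that \<open>0 \<le> \<delta>\<close> thin] .
    then have "length C div 6 \<le> nat \<lceil>\<delta>\<rceil>" by linarith
    then show ?thesis by linarith
  qed
  then show ?thesis by blast
qed

end
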